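(* Let $M$ be a magma satisfying $(xy)z = xx$, $x(yz) = xx$ and $xy = yx$ for all $x,y,z\in M$. Then $M$ satisfies $xy = zu$ for all $x,y,z,u\in M$ if and only if $M$ avoids the magma $Q$ on $\{0,1,2,3\}$ with Cayley table \[ \begin{array}{c|cccc} Q & 0 & 1 & 2 & 3 \\ \hline 0 & 0 & 0 & 0 & 0 \\ 1 & 0 & 0 & 3 & 0 \\ 2 & 0 & 3 & 0 & 0 \\ 3 & 0 & 0 & 0 & 0 \end{array}. \]
   Context: A magma is a nonempty set with a binary operation, written by juxtaposition. A magma $M$ avoids a magma $F$ if no submagma of $M$ is isomorphic to $F$. *)

theory Defs
  imports Main
begin

text \<open>A magma is modelled as a type 'a (nonempty) with a binary operation on all of it.
  A finite magma given by a table is a carrier set A together with an operation on A.\<close>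

definition submagma :: "('a \<Rightarrow> 'a \<Rightarrow> 'a) \<Rightarrow> 'a set \<Rightarrow> bool" where
  "submagma mult S \<longleftrightarrow> S \<noteq> {} \<and> (\<forall>x\<in>S. \<forall>y\<in>S. mult x y \<in> S)"

definition magma_iso :: "'b set \<Rightarrow> ('b \<Rightarrow> 'b \<Rightarrow> 'b) \<Rightarrow> 'a set \<Rightarrow> ('a \<Rightarrow> 'a \<Rightarrow> 'a) \<Rightarrow> bool" where
  "magma_iso A opA S opS \<longleftrightarrow>
     (\<exists>f. bij_betw f A S \<and> (\<forall>x\<in>A. \<forall>y\<in>A. f (opA x y) = opS (f x) (f y)))"

definition avoids :: "('a \<Rightarrow> 'a \<Rightarrow> 'a) \<Rightarrow> 'b set \<Rightarrow> ('b \<Rightarrow> 'b \<Rightarrow> 'b) \<Rightarrow> bool" where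
  "avoids mult A opA \<longleftrightarrow> \<not> (\<exists>S. submagma mult S \<and> magma_iso A opA S mult)"

definition Q_carrier :: "nat set" where
  "Q_carrier = {0, 1, 2, 3}"

definition Q_op :: "nat \<Rightarrow> nat \<Rightarrow> nat" where
  "Q_op x y = (if (x = 1 \<and> y = 2) \<or> (x = 2 \<and> y = 1) then 3 else 0)"

end

theory Submission
  imports Defs
begin

text \<open>A constant magma cannot contain a copy of the non-constant magma Q. Conversely, the
  three identities force all squares to coincide in one absorbing element 0, and all products
  of three factors to equal 0; so if some product ab differs from 0, then 0, a, b, ab multiply
  exactly like 0, 1, 2, 3 in Q.\<close>

lemma avoids_if_constant:
  fixes mult :: "'a \<Rightarrow> 'a \<Rightarrow> 'a" and opA :: "'b \<Rightarrow> 'b \<Rightarrow> 'b"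
  assumes const: "\<forall>x y z u. mult x y = mult z u"
    and closed: "\<forall>x\<in>A. \<forall>y\<in>A. opA x y \<in> A"
    and mem: "x \<in> A" "y \<in> A" "z \<in> A" "u \<in> A"
    and nonconstant: "opA x y \<noteq> opA z u"
  shows "avoids mult A opA"
  unfolding avoids_def magma_iso_def
proof clarify
  fix S f
  assume bij: "bij_betw f A S"
    and hom: "\<forall>x\<in>A. \<forall>y\<in>A. f (opA x y) = mult (f x) (f y)"
  have "f (opA x y) = f (opA z u)"
    using hom const mem by metis
  moreover have "inj_on f A"
    using bij by (rule bij_betw_imp_inj_on)
  ultimately show False
    using closed mem nonconstant by (meson inj_onD)
qed

lemma not_avoids_if_embedding:
  fixes mult :: "'a \<Rightarrow> 'a \<Rightarrow> 'a" and opA :: "'b \<Rightarrow> 'b \<Rightarrow> 'b"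
  assumes "A \<noteq> {}"
    and closed: "\<forall>x\<in>A. \<forall>y\<in>A. opA x y \<in> A"
    and "inj_on f A"
    and hom: "\<forall>x\<in>A. \<forall>y\<in>A. f (opA x y) = mult (f x) (f y)"
  shows "\<not> avoids mult A opA"
proof -
  have "submagma mult (f ` A)"
    unfolding submagma_def using \<open>A \<noteq> {}\<close> closed hom by (auto simp: image_iff) metis
  moreover have "magma_iso A opA (f ` A) mult"
    unfolding magma_iso_def using \<open>inj_on f A\<close> hom by (auto intro: bij_betw_imageI)
  ultimately show ?thesis
    unfolding avoids_def by blast
qed

lemma Q_op_closed: "\<forall>x\<in>Q_carrier. \<forall>y\<in>Q_carrier. Q_op x y \<in> Q_carrier"
  by (simp add: Q_carrier_def Q_op_def)

lemma not_avoids_Q_if_Q_table: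
  fixes mult :: "'a \<Rightarrow> 'a \<Rightarrow> 'a"
  assumes "\<And>x. mult z x = z" "\<And>x. mult x z = z"
    and "mult a a = z" "mult b b = z" "mult c c = z"
    and "mult a b = c" "mult b a = c"
    and "mult a c = z" "mult c a = z" "mult b c = z" "mult c b = z"
    and "c \<noteq> z"
  shows "\<not> avoids mult Q_carrier Q_op"
proof (rule not_avoids_if_embedding)
  have "distinct [z, a, b, c]"
    using assms by auto
  then show "inj_on (nth [z, a, b, c]) Q_carrier"
    by (rule inj_on_nth) (simp add: Q_carrier_def)
  show "\<forall>x\<in>Q_carrier. \<forall>y\<in>Q_carrier.
      [z, a, b, c] ! Q_op x y = mult ([z, a, b, c] ! x) ([z, a, b, c] ! y)"
    using assms by (simp add: Q_carrier_def Q_op_def)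
qed (use Q_op_closed in \<open>simp_all add: Q_carrier_def\<close>)

locale flat_comm_magma =
  fixes mult :: "'a \<Rightarrow> 'a \<Rightarrow> 'a"
  assumes mult_left_flat: "\<And>x y z. mult (mult x y) z = mult x x"
    and mult_right_flat: "\<And>x y z. mult x (mult y z) = mult x x"
    and mult_commute: "\<And>x y. mult x y = mult y x"
begin

lemma square_eq: "mult x x = mult y y"
  by (metis mult_left_flat mult_commute)

lemma not_avoids_Q_if_product_neq_square:
  assumes "mult a b \<noteq> mult a a"
  shows "\<not> avoids mult Q_carrier Q_op"
proof (rule not_avoids_Q_if_Q_table[where a = a and b = b and c = "mult a b"])
  show "mult (mult a a) x = mult a a" for x
    by (rule mult_left_flat)
  show "mult x (mult a a) = mult a a" for x
    using mult_right_flat square_eq by metis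
qed (use assms mult_left_flat mult_right_flat mult_commute square_eq in metis)+

end

theorem mainTheorem4:
  fixes mult :: "'a \<Rightarrow> 'a \<Rightarrow> 'a"
  assumes "\<forall>x y z. mult (mult x y) z = mult x x"
    and "\<forall>x y z. mult x (mult y z) = mult x x"
    and "\<forall>x y. mult x y = mult y x"
  shows "(\<forall>x y z u. mult x y = mult z u) \<longleftrightarrow> avoids mult Q_carrier Q_op"
proof
  assume "\<forall>x y z u. mult x y = mult z u"
  then show "avoids mult Q_carrier Q_op"
    by (rule avoids_if_constant[where x = 1 and y = 2 and z = 0 and u = 0, OF _ Q_op_closed])
      (simp_all add: Q_carrier_def Q_op_def)
next
  interpret flat_comm_magma mult
    using assms by unfold_locales blast+
  assume avoids_Q: "avoids mult Q_carrier Q_op"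
  have "mult x y = mult x x" for x y
    using not_avoids_Q_if_product_neq_square avoids_Q by blast
  then show "\<forall>x y z u. mult x y = mult z u"
    using square_eq by metis
qed

end
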